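(* Let $\mathcal{A}$ be a strong $T_0$-family and $\varepsilon>0$. Then $\mathcal{X}_\mathcal{A}$ does not admit any uncountable equilateral set, and the unit sphere of $\mathcal{X}_\mathcal{A}$ does not admit any uncountable $(1+\varepsilon)$-separated set.
   Context: A set $\mathcal{Y}$ is equilateral if there is $\delta>0$ with $\|y-y'\|=\delta$ for distinct $y,y'\in\mathcal{Y}$, and $\gamma$-separated if $\|y-y'\|\ge\gamma$ for distinct $y,y'$. $c_{00}(\omega_1)$ is the set of finitely supported $x\in\mathbb{R}^{\omega_1}$; $\|x\|_\mathcal{A}=\sup_{A\in\mathcal{A}}\sqrt{\sum_{\alpha\in A}x(\alpha)^2}$ and $\mathcal{X}_\mathcal{A}$ is the closure of $c_{00}(\omega_1)$ in $\{x\in\mathbb{R}^{\omega_1}:\|x\|_\mathcal{A}<\infty\}$. For disjoint $A,B$, $A\otimes B=\{\{\alpha,\beta\}:\alpha\in A,\beta\in B\}$. A function $c=(c_0,c_1):[\omega_1]^2\to I\times J$ ($0,1\in I$, $J\ne\emptyset$) is a $T$-coloring if for every uncountable pairwise disjoint family $\{\{a_\xi(0),a_\xi(1)\}:\xi<\omega_1\}$ of pairs and all $(i_0,j_0),(i_1,j_1)\in I\times J$ there are $\xi<\eta$ with $c(\{a_\xi(0),a_\eta(0)\})=(i_0,j_0)$, $c(\{a_\xi(1),a_\eta(1)\})=(i_1,j_1)$; it is a strong $T$-coloring if moreover for every uncountable pairwise disjoint family $\{A_\xi:\xi<\omega_1\}$ of finite subsets of $\omega_1$ there are $\xi<\eta$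 with $c_0[A_\xi\otimes A_\eta]=\{0\}$ and $\xi<\eta$ with $c_0[A_\xi\otimes A_\eta]=\{1\}$. A strong $T_0$-family is $\mathcal{A}_c=\{a\subseteq\omega_1\text{ finite}:c_0[[a]^2]\subseteq\{0\}\}$ for a strong $T$-coloring $c$. *)

theory Defs
  imports "HOL-Analysis.Analysis" "HOL-Library.Countable_Set"
begin

text \<open>omega_1 is modelled by a well-ordered type whose carrier is uncountable
and all of whose proper initial segments are countable.\<close>
definition omega1_type :: "'a::wellorder itself \<Rightarrow> bool" where
  "omega1_type _ \<longleftrightarrow> uncountable (UNIV :: 'a set) \<and> (\<forall>\<alpha>::'a. countable {\<beta>. \<beta> < \<alpha>})"

definition otimes :: "'a set \<Rightarrow> 'a set \<Rightarrow> 'a set set" where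
  "otimes A B = {{\<alpha>, \<beta>} | \<alpha> \<beta>. \<alpha> \<in> A \<and> \<beta> \<in> B}"

definition pairs :: "'a set \<Rightarrow> 'a set set" where
  "pairs a = {p. p \<subseteq> a \<and> card p = 2}"

text \<open>A coloring c = (c0,c1) : [omega_1]^2 \<rightarrow> I \<times> J is a function on sets,
only its values on two-element sets matter.\<close>
definition T_coloring :: "'i::zero_neq_one set \<Rightarrow> 'j set \<Rightarrow> ('a::wellorder set \<Rightarrow> 'i \<times> 'j) \<Rightarrow> bool" where
  "T_coloring I J c \<longleftrightarrow>
     0 \<in> I \<and> 1 \<in> I \<and> J \<noteq> {} \<and>
     (\<forall>p. card p = 2 \<longrightarrow> c p \<in> I \<times> J) \<and>
     (\<forall>a0 a1 :: 'a \<Rightarrow> 'a.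
        ((\<forall>\<xi>. a0 \<xi> \<noteq> a1 \<xi>) \<and>
         (\<forall>\<xi> \<eta>. \<xi> \<noteq> \<eta> \<longrightarrow> {a0 \<xi>, a1 \<xi>} \<inter> {a0 \<eta>, a1 \<eta>} = {})) \<longrightarrow>
        (\<forall>i0\<in>I. \<forall>j0\<in>J. \<forall>i1\<in>I. \<forall>j1\<in>J.
           \<exists>\<xi> \<eta>. \<xi> < \<eta> \<and> c {a0 \<xi>, a0 \<eta>} = (i0, j0) \<and> c {a1 \<xi>, a1 \<eta>} = (i1, j1)))"

definition strong_T_coloring :: "'i::zero_neq_one set \<Rightarrow> 'j set \<Rightarrow> ('a::wellorder set \<Rightarrow> 'i \<times> 'j) \<Rightarrow> bool" where
  "strong_T_coloring I J c \<longleftrightarrow>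
     T_coloring I J c \<and>
     (\<forall>A :: 'a \<Rightarrow> 'a set.
        ((\<forall>\<xi>. finite (A \<xi>) \<and> A \<xi> \<noteq> {}) \<and>
         (\<forall>\<xi> \<eta>. \<xi> \<noteq> \<eta> \<longrightarrow> A \<xi> \<inter> A \<eta> = {})) \<longrightarrow>
        (\<exists>\<xi> \<eta>. \<xi> < \<eta> \<and> (fst \<circ> c) ` otimes (A \<xi>) (A \<eta>) = {0}) \<and>
        (\<exists>\<xi> \<eta>. \<xi> < \<eta> \<and> (fst \<circ> c) ` otimes (A \<xi>) (A \<eta>) = {1}))"

definition T0_family :: "('a set \<Rightarrow> 'i::zero \<times> 'j) \<Rightarrow> 'a set set" where
  "T0_family c = {a. finite a \<and> (fst \<circ> c) ` pairs a \<subseteq> {0}}"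

definition normA :: "'a set set \<Rightarrow> ('a \<Rightarrow> real) \<Rightarrow> real" where
  "normA \<A> x = (SUP A\<in>\<A>. sqrt (\<Sum>\<alpha>\<in>A. (x \<alpha>)\<^sup>2))"

definition normA_finite :: "'a set set \<Rightarrow> ('a \<Rightarrow> real) \<Rightarrow> bool" where
  "normA_finite \<A> x \<longleftrightarrow> bdd_above ((\<lambda>A. sqrt (\<Sum>\<alpha>\<in>A. (x \<alpha>)\<^sup>2)) ` \<A>)"

definition c00 :: "('a \<Rightarrow> real) set" where
  "c00 = {y. finite {\<alpha>. y \<alpha> \<noteq> 0}}"

definition XA :: "'a set set \<Rightarrow> ('a \<Rightarrow> real) set" where
  "XA \<A> = {x. normA_finite \<A> x \<and>
              (\<forall>e>0. \<exists>y\<in>c00. normA_finite \<A> (x - y) \<and> normA \<A> (x - y) < e)}"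

definition equilateral :: "'a set set \<Rightarrow> ('a \<Rightarrow> real) set \<Rightarrow> bool" where
  "equilateral \<A> Y \<longleftrightarrow> (\<exists>\<delta>>0. \<forall>y\<in>Y. \<forall>y'\<in>Y. y \<noteq> y' \<longrightarrow> normA \<A> (y - y') = \<delta>)"

definition separated :: "'a set set \<Rightarrow> real \<Rightarrow> ('a \<Rightarrow> real) set \<Rightarrow> bool" where
  "separated \<A> \<gamma> Y \<longleftrightarrow> (\<forall>y\<in>Y. \<forall>y'\<in>Y. y \<noteq> y' \<longrightarrow> normA \<A> (y - y') \<ge> \<gamma>)"

definition unit_sphereA :: "'a set set \<Rightarrow> ('a \<Rightarrow> real) set" where
  "unit_sphereA \<A> = {x \<in> XA \<A>. normA \<A> x = 1}"

end

(* Let e > 0 and let Y be an uncountable family in X_A whose members are pairwise at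
   distance at least 3e.  Approximate every y by a finitely supported z_y.  A Delta-system
   argument, followed by rounding on the root r, gives an uncountable subfamily on which the
   z_y nearly agree on r; cutting r away leaves vectors u_y with pairwise disjoint nonempty
   finite supports T_y and |N(y - y') - N(u_y - u_y')| < 3e.

   For a strong T0-family the norm of u_y - u_y' is governed by the colour of T_y x T_y'.
   If c_0 is 1 there, no admissible set meets both supports, so
   N(u_y - u_y') <= max (N u_y) (N u_y').  If c_0 is 0 there, norming sets of u_y and u_y'
   can be united, so N(u_y)^2 + N(u_y')^2 <= N(u_y - u_y')^2.  A strong T-coloring yields
   pairs of both kinds in every uncountable disjoint family.

   On the unit sphere, a pair of the first kind is at distance at most 1 + 4e < 1 + epsilon.
   For an equilateral family with distance delta, first make the N(u_y) equal up to e; a pair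
   of the first kind shows that they are at least about delta, and then a pair of the second
   kind is at distance about sqrt 2 * delta. *)
theory Submission
  imports Defs "HOL-Library.Function_Algebras"
begin

section \<open>L2 sums and the A-norm\<close>

lemma L2_set_Int_support:
  assumes "finite A" "\<And>i. i \<in> A \<Longrightarrow> i \<notin> T \<Longrightarrow> x i = 0"
  shows "L2_set x A = L2_set x (A \<inter> T)"
  unfolding L2_set_def using assms by (intro arg_cong[where f = sqrt] sum.mono_neutral_right) auto

lemma L2_set_power2: "(L2_set f A)\<^sup>2 = (\<Sum>i\<in>A. (f i)\<^sup>2)"
  unfolding L2_set_def by (simp add: sum_nonneg)

lemma L2_set_diff_Un_power2:
  assumes "finite A" "finite A'" "A \<inter> A' = {}"
    and "\<And>i. i \<in> A \<Longrightarrow> u' i = 0" "\<And>i. i \<in> A' \<Longrightarrow> u i = 0"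
  shows "(L2_set (u - u') (A \<union> A'))\<^sup>2 = (L2_set u A)\<^sup>2 + (L2_set u' A')\<^sup>2"
proof -
  have "(L2_set (u - u') (A \<union> A'))\<^sup>2 = (\<Sum>i\<in>A. ((u - u') i)\<^sup>2) + (\<Sum>i\<in>A'. ((u - u') i)\<^sup>2)"
    unfolding L2_set_power2 using assms(1-3) by (rule sum.union_disjoint)
  also have "\<dots> = (\<Sum>i\<in>A. (u i)\<^sup>2) + (\<Sum>i\<in>A'. (u' i)\<^sup>2)"
    using assms(4,5) by (simp cong: sum.cong)
  finally show ?thesis unfolding L2_set_power2 .
qed

lemma normA_eq_SUP_L2_set: "normA \<A> x = (SUP A\<in>\<A>. L2_set x A)"
  unfolding normA_def L2_set_def ..

lemma normA_finite_iff_bdd_L2_set: "normA_finite \<A> x \<longleftrightarrow> bdd_above ((\<lambda>A. L2_set x A) ` \<A>)"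
  unfolding normA_finite_def L2_set_def ..

lemma L2_set_le_normA: "normA_finite \<A> x \<Longrightarrow> A \<in> \<A> \<Longrightarrow> L2_set x A \<le> normA \<A> x"
  unfolding normA_eq_SUP_L2_set normA_finite_iff_bdd_L2_set by (rule cSUP_upper)

lemma normA_le: "\<A> \<noteq> {} \<Longrightarrow> (\<And>A. A \<in> \<A> \<Longrightarrow> L2_set x A \<le> M) \<Longrightarrow> normA \<A> x \<le> M"
  unfolding normA_eq_SUP_L2_set by (rule cSUP_least)

lemma normA_finiteI: "(\<And>A. A \<in> \<A> \<Longrightarrow> L2_set x A \<le> M) \<Longrightarrow> normA_finite \<A> x"
  unfolding normA_finite_iff_bdd_L2_set by (rule bdd_aboveI2)

lemma normA_nonneg: "\<A> \<noteq> {} \<Longrightarrow> normA_finite \<A> x \<Longrightarrow> 0 \<le> normA \<A> x"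
  using L2_set_le_normA L2_set_nonneg order_trans by blast

lemma normA_zero: "\<A> \<noteq> {} \<Longrightarrow> normA \<A> 0 = 0"
  unfolding normA_eq_SUP_L2_set by (simp add: L2_set_def)

lemma normA_minus [simp]: "normA \<A> (- x) = normA \<A> x" "normA_finite \<A> (- x) = normA_finite \<A> x"
  unfolding normA_eq_SUP_L2_set normA_finite_iff_bdd_L2_set L2_set_def by simp_all

lemma normA_minus_commute:
  "normA \<A> (x - y) = normA \<A> (y - x)" "normA_finite \<A> (x - y) = normA_finite \<A> (y - x)"
  using normA_minus[of \<A> "y - x"] by simp_all

lemma L2_set_add_le_normA:
  assumes "normA_finite \<A> x" "normA_finite \<A> y" "A \<in> \<A>"
  shows "L2_set (x + y) A \<le> normA \<A> x + normA \<A> y"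
proof -
  have "L2_set (x + y) A \<le> L2_set x A + L2_set y A"
    using L2_set_triangle_ineq[of x y A] by (simp add: plus_fun_def)
  also have "\<dots> \<le> normA \<A> x + normA \<A> y"
    using L2_set_le_normA[OF assms(1,3)] L2_set_le_normA[OF assms(2,3)] by simp
  finally show ?thesis .
qed

lemma normA_finite_add:
  "normA_finite \<A> x \<Longrightarrow> normA_finite \<A> y \<Longrightarrow> normA_finite \<A> (x + y)"
  by (rule normA_finiteI) (rule L2_set_add_le_normA)

lemma normA_triangle:
  "\<A> \<noteq> {} \<Longrightarrow> normA_finite \<A> x \<Longrightarrow> normA_finite \<A> y \<Longrightarrow> normA \<A> (x + y) \<le> normA \<A> x + normA \<A> y"
  by (metis normA_le L2_set_add_le_normA)

lemma normA_finite_diff: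
  "normA_finite \<A> x \<Longrightarrow> normA_finite \<A> y \<Longrightarrow> normA_finite \<A> (x - y)"
  using normA_finite_add[of \<A> x "- y"] by simp

lemma normA_reverse_triangle:
  assumes "\<A> \<noteq> {}" "normA_finite \<A> x" "normA_finite \<A> y"
  shows "\<bar>normA \<A> x - normA \<A> y\<bar> \<le> normA \<A> (x - y)"
proof -
  have "normA \<A> ((x - y) + y) \<le> normA \<A> (x - y) + normA \<A> y"
    "normA \<A> ((y - x) + x) \<le> normA \<A> (y - x) + normA \<A> x"
    using normA_triangle[OF assms(1) normA_finite_diff] assms by (simp_all only:)
  then show ?thesis
    using normA_minus_commute(1)[of \<A> x y] by simp
qed

lemma normA_diff_perturb:
  assumes "\<A> \<noteq> {}" "normA_finite \<A> (y - z)" "normA_finite \<A> (y' - z')"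
    and "normA_finite \<A> ((z - z') - (u - u'))" "normA_finite \<A> (y - y')" "normA_finite \<A> (u - u')"
  shows "\<bar>normA \<A> (y - y') - normA \<A> (u - u')\<bar>
    \<le> normA \<A> (y - z) + normA \<A> (y' - z') + normA \<A> ((z - z') - (u - u'))"
proof -
  have fin: "normA_finite \<A> (z' - y')"
    using assms(3) normA_minus_commute(2)[of \<A> y' z'] by simp
  have decomp: "(y - y') - (u - u') = ((y - z) + (z' - y')) + ((z - z') - (u - u'))"
    by (simp add: algebra_simps)
  have "\<bar>normA \<A> (y - y') - normA \<A> (u - u')\<bar> \<le> normA \<A> ((y - y') - (u - u'))"
    by (rule normA_reverse_triangle[OF assms(1,5,6)])
  also have "\<dots> \<le> normA \<A> ((y - z) + (z' - y')) + normA \<A> ((z - z') - (u - u'))"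
    unfolding decomp by (rule normA_triangle[OF assms(1) normA_finite_add[OF assms(2) fin] assms(4)])
  also have "\<dots> \<le> normA \<A> (y - z) + normA \<A> (z' - y') + normA \<A> ((z - z') - (u - u'))"
    using normA_triangle[OF assms(1,2) fin] by simp
  finally show ?thesis using normA_minus_commute(1)[of \<A> z' y'] by simp
qed

lemma XA_normA_finite: "x \<in> XA \<A> \<Longrightarrow> normA_finite \<A> x"
  unfolding XA_def by blast

lemma XA_approx_c00:
  assumes "Y \<subseteq> XA \<A>" "0 < e"
  obtains z where "\<And>y. y \<in> Y \<Longrightarrow> z y \<in> c00" "\<And>y. y \<in> Y \<Longrightarrow> normA_finite \<A> (y - z y)"
    "\<And>y. y \<in> Y \<Longrightarrow> normA \<A> (y - z y) < e"
proof -
  have "\<forall>y\<in>Y. \<exists>z. z \<in> c00 \<and> normA_finite \<A> (y - z) \<and> normA \<A> (y - z) < e"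
    using assms unfolding XA_def by blast
  then show ?thesis using that by metis
qed

lemma separated_mono: "separated \<A> \<gamma> Y \<Longrightarrow> \<gamma>' \<le> \<gamma> \<Longrightarrow> separated \<A> \<gamma>' Y"
  unfolding separated_def by (meson order_trans)

section \<open>Uncountable families\<close>

lemma uncountable_fibre:
  fixes f :: "'b \<Rightarrow> 'c::countable"
  assumes "uncountable X"
  obtains t where "uncountable {x\<in>X. f x = t}"
proof -
  have "\<exists>t. uncountable {x\<in>X. f x = t}"
  proof (rule ccontr)
    assume "\<nexists>t. uncountable {x\<in>X. f x = t}"
    then have "countable (\<Union>t. {x\<in>X. f x = t})" by (intro countable_UN) auto
    moreover have "(\<Union>t. {x\<in>X. f x = t}) = X" by blast
    ultimately show False using assms by simp
  qed
  then show ?thesis using that by blast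
qed

lemma uncountable_Collect_at_most_one_exception:
  assumes "uncountable W" "\<And>x y. x \<in> W \<Longrightarrow> y \<in> W \<Longrightarrow> \<not> P x \<Longrightarrow> \<not> P y \<Longrightarrow> x = y"
  shows "uncountable {x\<in>W. P x}"
proof
  assume "countable {x\<in>W. P x}"
  moreover have "countable {x\<in>W. \<not> P x}"
  proof (cases "{x\<in>W. \<not> P x} = {}")
    case True
    then show ?thesis by (simp only: countable_empty)
  next
    case False
    then obtain x0 where "x0 \<in> W" "\<not> P x0" by blast
    then have "{x\<in>W. \<not> P x} \<subseteq> {x0}" using assms(2) by blast
    then show ?thesis by (rule countable_subset) simp
  qed
  ultimately have "countable ({x\<in>W. P x} \<union> {x\<in>W. \<not> P x})" by (rule countable_Un)
  moreover have "{x\<in>W. P x} \<union> {x\<in>W. \<not> P x} = W" by blast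
  ultimately show False using assms(1) by simp
qed

lemma uncountable_subset_close:
  fixes f :: "'b \<Rightarrow> real"
  assumes "uncountable X" "0 < e"
  obtains X' where "X' \<subseteq> X" "uncountable X'" "\<And>x y. x \<in> X' \<Longrightarrow> y \<in> X' \<Longrightarrow> \<bar>f x - f y\<bar> < e"
proof -
  obtain k where k: "uncountable {x\<in>X. \<lfloor>f x / e\<rfloor> = k}"
    by (rule uncountable_fibre[OF assms(1)])
  show ?thesis
  proof (rule that[OF _ k])
    fix x y assume "x \<in> {x\<in>X. \<lfloor>f x / e\<rfloor> = k}" "y \<in> {x\<in>X. \<lfloor>f x / e\<rfloor> = k}"
    then have "\<lfloor>f x / e\<rfloor> = \<lfloor>f y / e\<rfloor>" by simp
    then have "\<bar>f x / e - f y / e\<bar> < 1"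
      using floor_correct[of "f x / e"] floor_correct[of "f y / e"] by linarith
    then show "\<bar>f x - f y\<bar> < e" using assms(2) by (simp add: diff_divide_distrib[symmetric] divide_less_eq)
  qed blast
qed

lemma uncountable_subset_close_on_finite:
  fixes f :: "'b \<Rightarrow> 'a \<Rightarrow> real"
  assumes "finite r" "uncountable X" "0 < e"
  obtains X' where "X' \<subseteq> X" "uncountable X'"
    "\<And>x y \<alpha>. x \<in> X' \<Longrightarrow> y \<in> X' \<Longrightarrow> \<alpha> \<in> r \<Longrightarrow> \<bar>f x \<alpha> - f y \<alpha>\<bar> < e"
  using assms(1)
proof (induction r arbitrary: thesis)
  case empty
  show ?case by (rule empty.prems[OF _ assms(2)]) auto
next
  case (insert \<alpha> r)
  obtain X1 where X1: "X1 \<subseteq> X" "uncountable X1"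
    "\<And>x y \<beta>. x \<in> X1 \<Longrightarrow> y \<in> X1 \<Longrightarrow> \<beta> \<in> r \<Longrightarrow> \<bar>f x \<beta> - f y \<beta>\<bar> < e"
    by (rule insert.IH) blast
  obtain X2 where X2: "X2 \<subseteq> X1" "uncountable X2"
    "\<And>x y. x \<in> X2 \<Longrightarrow> y \<in> X2 \<Longrightarrow> \<bar>f x \<alpha> - f y \<alpha>\<bar> < e"
    by (rule uncountable_subset_close[OF X1(2) assms(3), of "\<lambda>x. f x \<alpha>"]) blast
  show ?case
  proof (rule insert.prems[OF _ X2(2)])
    show "X2 \<subseteq> X" using X1(1) X2(1) by (rule order_trans[rotated])
    show "\<bar>f x \<beta> - f y \<beta>\<bar> < e" if "x \<in> X2" "y \<in> X2" "\<beta> \<in> insert \<alpha> r" for x y \<beta>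
      using that X1(3) X2(1,3) by auto
  qed
qed

lemma uncountable_disjoint_subfamily:
  fixes S :: "'b \<Rightarrow> 'a set"
  assumes "uncountable X" "\<And>x. x \<in> X \<Longrightarrow> finite (S x)" "\<And>\<alpha>. countable {x\<in>X. \<alpha> \<in> S x}"
  obtains X' where "X' \<subseteq> X" "uncountable X'" "disjoint_family_on S X'"
proof -
  define F where "F = {D. D \<subseteq> X \<and> pairwise (\<lambda>x y. S x \<inter> S y = {}) D}"
  have "\<Union>C \<in> F" if "C \<in> chains F" for C
    using that pairwise_chain_Union[of C] unfolding F_def chains_def by blast
  then obtain M where M: "M \<in> F" "\<And>D. D \<in> F \<Longrightarrow> M \<subseteq> D \<Longrightarrow> D = M"
    using Zorn_Lemma[of F] by blast
  have "uncountable M"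
  proof
    assume "countable M"
    define C where "C = (\<Union>x\<in>M. S x)"
    have "countable (S x)" if "x \<in> M" for x
      using that M(1) assms(2) unfolding F_def by (blast intro: countable_finite)
    with \<open>countable M\<close> have "countable C"
      unfolding C_def by (rule countable_UN)
    define B where "B = M \<union> (\<Union>\<alpha>\<in>C. {x\<in>X. \<alpha> \<in> S x})"
    have "countable B"
      unfolding B_def using \<open>countable C\<close> \<open>countable M\<close> assms(3) by (intro countable_Un countable_UN) auto
    then have "\<not> X \<subseteq> B" using assms(1) countable_subset by blast
    then obtain y where "y \<in> X" "y \<notin> B" by blast
    then have y: "y \<notin> M" "\<And>x. x \<in> M \<Longrightarrow> S x \<inter> S y = {}"
      unfolding B_def C_def by blast+
    have "insert y M \<in> F"
      using M(1) \<open>y \<in> X\<close> y unfolding F_def by (simp add: pairwise_insert; blast)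
    then show False using M(2) y(1) by blast
  qed
  moreover have "M \<subseteq> X" "disjoint_family_on S M"
    using M(1) unfolding F_def disjoint_family_on_def pairwise_def by blast+
  ultimately show ?thesis using that by blast
qed

lemma uncountable_Delta_system_card_le:
  fixes S :: "'b \<Rightarrow> 'a set"
  assumes "uncountable X" "\<forall>x\<in>X. finite (S x) \<and> card (S x) \<le> n"
  obtains r X' where "finite r" "X' \<subseteq> X" "uncountable X'"
    "\<And>x y. x \<in> X' \<Longrightarrow> y \<in> X' \<Longrightarrow> x \<noteq> y \<Longrightarrow> S x \<inter> S y \<subseteq> r"
  using assms
proof (induction n arbitrary: X S thesis)
  case 0
  have "S x = {}" if "x \<in> X" for x using "0.prems"(3) that card_0_eq by auto
  then show ?case by (intro "0.prems"(1)[of "{}" X] "0.prems"(2)) auto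
next
  case (Suc n)
  show ?case
  proof (cases "\<exists>\<alpha>. uncountable {x\<in>X. \<alpha> \<in> S x}")
    case True
    then obtain \<alpha> where \<alpha>: "uncountable {x\<in>X. \<alpha> \<in> S x}" by blast
    have card_le: "\<forall>x\<in>{x\<in>X. \<alpha> \<in> S x}. finite (S x - {\<alpha>}) \<and> card (S x - {\<alpha>}) \<le> n"
      using Suc.prems(3) by (auto simp: card_Diff_singleton)
    obtain r X' where r: "finite r" "X' \<subseteq> {x\<in>X. \<alpha> \<in> S x}" "uncountable X'"
      "\<And>x y. x \<in> X' \<Longrightarrow> y \<in> X' \<Longrightarrow> x \<noteq> y \<Longrightarrow> (S x - {\<alpha>}) \<inter> (S y - {\<alpha>}) \<subseteq> r"
      by (rule Suc.IH[of _ "\<lambda>x. S x - {\<alpha>}", OF _ \<alpha> card_le]) (rule that)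
    show ?thesis
    proof (rule Suc.prems(1)[of "insert \<alpha> r" X'])
      show "S x \<inter> S y \<subseteq> insert \<alpha> r" if "x \<in> X'" "y \<in> X'" "x \<noteq> y" for x y
        using r(4)[OF that] by blast
    qed (use r(1-3) in auto)
  next
    case False
    then have "countable {x\<in>X. \<alpha> \<in> S x}" for \<alpha> by blast
    moreover have "finite (S x)" if "x \<in> X" for x using Suc.prems(3) that by blast
    ultimately obtain X' where X': "X' \<subseteq> X" "uncountable X'" "disjoint_family_on S X'"
      using uncountable_disjoint_subfamily[OF Suc.prems(2)] by blast
    show ?thesis
    proof (rule Suc.prems(1)[of "{}" X' , OF _ X'(1,2)])
      show "S x \<inter> S y \<subseteq> {}" if "x \<in> X'" "y \<in> X'" "x \<noteq> y" for x y
        using X'(3) that by (simp add: disjoint_family_onD)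
    qed simp
  qed
qed

lemma uncountable_Delta_system:
  fixes S :: "'b \<Rightarrow> 'a set"
  assumes "uncountable X" "\<And>x. x \<in> X \<Longrightarrow> finite (S x)"
  obtains r X' where "finite r" "X' \<subseteq> X" "uncountable X'"
    "\<And>x y. x \<in> X' \<Longrightarrow> y \<in> X' \<Longrightarrow> x \<noteq> y \<Longrightarrow> S x \<inter> S y \<subseteq> r"
proof -
  obtain n where n: "uncountable {x\<in>X. card (S x) = n}"
    by (rule uncountable_fibre[OF assms(1)])
  have card_le: "\<forall>x\<in>{x\<in>X. card (S x) = n}. finite (S x) \<and> card (S x) \<le> n"
    using assms(2) by auto
  obtain r X' where "finite r" "X' \<subseteq> {x\<in>X. card (S x) = n}" "uncountable X'"
    "\<And>x y. x \<in> X' \<Longrightarrow> y \<in> X' \<Longrightarrow> x \<noteq> y \<Longrightarrow> S x \<inter> S y \<subseteq> r"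
    by (rule uncountable_Delta_system_card_le[OF n card_le]) (rule that)
  then show ?thesis using that[of r X'] by blast
qed

lemma uncountable_Delta_system_close_on_root:
  fixes z :: "'b \<Rightarrow> 'a \<Rightarrow> real"
  assumes "uncountable Y" "\<And>y. y \<in> Y \<Longrightarrow> finite {\<alpha>. z y \<alpha> \<noteq> 0}" "0 < e"
  obtains r W where "finite r" "W \<subseteq> Y" "uncountable W"
    "\<And>y y'. y \<in> W \<Longrightarrow> y' \<in> W \<Longrightarrow> y \<noteq> y' \<Longrightarrow> {\<alpha>. z y \<alpha> \<noteq> 0} \<inter> {\<alpha>. z y' \<alpha> \<noteq> 0} \<subseteq> r"
    "\<And>y y'. y \<in> W \<Longrightarrow> y' \<in> W \<Longrightarrow> (\<Sum>\<alpha>\<in>r. \<bar>z y \<alpha> - z y' \<alpha>\<bar>) \<le> e"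
proof -
  obtain r Y1 where r: "finite r" "Y1 \<subseteq> Y" "uncountable Y1"
    "\<And>y y'. y \<in> Y1 \<Longrightarrow> y' \<in> Y1 \<Longrightarrow> y \<noteq> y' \<Longrightarrow> {\<alpha>. z y \<alpha> \<noteq> 0} \<inter> {\<alpha>. z y' \<alpha> \<noteq> 0} \<subseteq> r"
    using uncountable_Delta_system[of Y "\<lambda>y. {\<alpha>. z y \<alpha> \<noteq> 0}"] assms(1,2) by blast
  define \<kappa> where "\<kappa> = e / (real (card r) + 1)"
  have "\<kappa> > 0" unfolding \<kappa>_def using assms(3) by simp
  obtain W where W: "W \<subseteq> Y1" "uncountable W"
    "\<And>y y' \<alpha>. y \<in> W \<Longrightarrow> y' \<in> W \<Longrightarrow> \<alpha> \<in> r \<Longrightarrow> \<bar>z y \<alpha> - z y' \<alpha>\<bar> < \<kappa>"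
    using uncountable_subset_close_on_finite[OF r(1,3) \<open>\<kappa> > 0\<close>, of z] by blast
  have close: "(\<Sum>\<alpha>\<in>r. \<bar>z y \<alpha> - z y' \<alpha>\<bar>) \<le> e" if "y \<in> W" "y' \<in> W" for y y'
  proof -
    have "(\<Sum>\<alpha>\<in>r. \<bar>z y \<alpha> - z y' \<alpha>\<bar>) \<le> (\<Sum>\<alpha>\<in>r. \<kappa>)"
      using W(3)[OF that] by (intro sum_mono) (simp add: less_imp_le)
    also have "\<dots> \<le> e"
      unfolding \<kappa>_def using assms(3) by (simp add: field_simps)
    finally show ?thesis .
  qed
  show ?thesis
  proof (rule that[OF r(1) _ W(2)])
    show "W \<subseteq> Y" using W(1) r(2) by blast
    show "{\<alpha>. z y \<alpha> \<noteq> 0} \<inter> {\<alpha>. z y' \<alpha> \<noteq> 0} \<subseteq> r" if "y \<in> W" "y' \<in> W" "y \<noteq> y'" for y y'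
      using that W(1) r(4) by blast
  qed (rule close)
qed

section \<open>Strong T-colorings\<close>

lemma omega1_embeds_into_uncountable:
  assumes "omega1_type TYPE('a::wellorder)" "uncountable W"
  obtains g :: "'a::wellorder \<Rightarrow> 'b" where "inj g" "range g \<subseteq> W"
proof -
  define g :: "'a \<Rightarrow> 'b" where
    "g = wfrec {(x, y). x < y} (\<lambda>h \<xi>. SOME w. w \<in> W \<and> w \<notin> h ` {\<beta>. \<beta> < \<xi>})"
  have fresh: "g \<xi> \<in> W \<and> g \<xi> \<notin> g ` {\<beta>. \<beta> < \<xi>}" for \<xi>
  proof -
    have "cut g {(x, y). x < y} \<xi> ` {\<beta>. \<beta> < \<xi>} = g ` {\<beta>. \<beta> < \<xi>}"
      by (auto simp: cut_apply)
    then have g\<xi>: "g \<xi> = (SOME w. w \<in> W \<and> w \<notin> g ` {\<beta>. \<beta> < \<xi>})"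
      unfolding g_def by (subst wfrec[OF wellorder_class.wf]) simp
    have "countable (g ` {\<beta>. \<beta> < \<xi>})"
      using assms(1) unfolding omega1_type_def by blast
    then have "\<not> W \<subseteq> g ` {\<beta>. \<beta> < \<xi>}"
      using assms(2) countable_subset by blast
    then have "\<exists>w. w \<in> W \<and> w \<notin> g ` {\<beta>. \<beta> < \<xi>}" by blast
    then show ?thesis unfolding g\<xi> by (rule someI_ex)
  qed
  have "inj g"
  proof (rule injI, rule ccontr)
    fix \<xi> \<eta> assume eq: "g \<xi> = g \<eta>" and "\<xi> \<noteq> \<eta>"
    from \<open>\<xi> \<noteq> \<eta>\<close> consider "\<xi> < \<eta>" | "\<eta> < \<xi>" by (rule linorder_neqE)
    then show False
    proof cases
      case 1
      then have "g \<eta> \<in> g ` {\<beta>. \<beta> < \<eta>}" unfolding eq[symmetric] by blast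
      then show False using fresh[of \<eta>] by blast
    next
      case 2
      then have "g \<xi> \<in> g ` {\<beta>. \<beta> < \<xi>}" unfolding eq by blast
      then show False using fresh[of \<xi>] by blast
    qed
  qed
  moreover have "range g \<subseteq> W" using fresh by blast
  ultimately show ?thesis by (rule that)
qed

lemma strong_T_coloringD:
  fixes c :: "'a::wellorder set \<Rightarrow> 'i::zero_neq_one \<times> 'j" and A :: "'a \<Rightarrow> 'a set"
  assumes "strong_T_coloring I J c"
    and "\<And>\<xi>. finite (A \<xi>)" "\<And>\<xi>. A \<xi> \<noteq> {}" "\<And>\<xi> \<eta>. \<xi> \<noteq> \<eta> \<Longrightarrow> A \<xi> \<inter> A \<eta> = {}"
    and "i = 0 \<or> i = 1"
  obtains \<xi> \<eta> where "\<xi> < \<eta>" "(fst \<circ> c) ` otimes (A \<xi>) (A \<eta>) = {i}"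
proof -
  from assms(1) have "\<forall>A :: 'a \<Rightarrow> 'a set.
      ((\<forall>\<xi>. finite (A \<xi>) \<and> A \<xi> \<noteq> {}) \<and> (\<forall>\<xi> \<eta>. \<xi> \<noteq> \<eta> \<longrightarrow> A \<xi> \<inter> A \<eta> = {})) \<longrightarrow>
      (\<exists>\<xi> \<eta>. \<xi> < \<eta> \<and> (fst \<circ> c) ` otimes (A \<xi>) (A \<eta>) = {0}) \<and>
      (\<exists>\<xi> \<eta>. \<xi> < \<eta> \<and> (fst \<circ> c) ` otimes (A \<xi>) (A \<eta>) = {1})"
    unfolding strong_T_coloring_def by (rule conjunct2)
  from spec[OF this, of A] have "(\<exists>\<xi> \<eta>. \<xi> < \<eta> \<and> (fst \<circ> c) ` otimes (A \<xi>) (A \<eta>) = {0}) \<and>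
      (\<exists>\<xi> \<eta>. \<xi> < \<eta> \<and> (fst \<circ> c) ` otimes (A \<xi>) (A \<eta>) = {1})"
    using assms(2-4) by blast
  then show ?thesis using assms(5) that by blast
qed

lemma strong_T_coloring_homogeneous_pair:
  fixes c :: "'a::wellorder set \<Rightarrow> 'i::zero_neq_one \<times> 'j" and T :: "'b \<Rightarrow> 'a set"
  assumes "omega1_type TYPE('a)" "strong_T_coloring I J c" "uncountable W"
    and "\<And>w. w \<in> W \<Longrightarrow> finite (T w)" "\<And>w. w \<in> W \<Longrightarrow> T w \<noteq> {}" "disjoint_family_on T W"
    and "i = 0 \<or> i = 1"
  obtains w w' where "w \<in> W" "w' \<in> W" "w \<noteq> w'" "(fst \<circ> c) ` otimes (T w) (T w') = {i}"
proof -
  obtain g :: "'a \<Rightarrow> 'b" where g: "inj g" "range g \<subseteq> W"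
    by (rule omega1_embeds_into_uncountable[OF assms(1,3)])
  have fin: "finite (T (g \<xi>))" and ne: "T (g \<xi>) \<noteq> {}" for \<xi>
    using g(2) assms(4,5) by auto
  have disj: "T (g \<xi>) \<inter> T (g \<eta>) = {}" if "\<xi> \<noteq> \<eta>" for \<xi> \<eta>
  proof (rule disjoint_family_onD[OF assms(6)])
    show "g \<xi> \<in> W" "g \<eta> \<in> W" using g(2) by auto
    show "g \<xi> \<noteq> g \<eta>" using g(1) that by (simp add: inj_eq)
  qed
  obtain \<xi> \<eta> where "\<xi> < \<eta>" "(fst \<circ> c) ` otimes (T (g \<xi>)) (T (g \<eta>)) = {i}"
    using strong_T_coloringD[where A = "\<lambda>\<xi>. T (g \<xi>)", OF assms(2) fin ne disj assms(7)] by blast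
  moreover have "g \<xi> \<noteq> g \<eta>" using \<open>\<xi> < \<eta>\<close> g(1) by (auto simp: inj_eq)
  ultimately show ?thesis using g(2) that by blast
qed

section \<open>Hereditary families of finite sets\<close>

definition disjointly_supported :: "'b set \<Rightarrow> ('b \<Rightarrow> 'a set) \<Rightarrow> ('b \<Rightarrow> 'a \<Rightarrow> real) \<Rightarrow> bool" where
  "disjointly_supported W T u \<longleftrightarrow>
     (\<forall>y\<in>W. finite (T y) \<and> T y \<noteq> {}) \<and> disjoint_family_on T W \<and> (\<forall>y i. i \<notin> T y \<longrightarrow> u y i = 0)"

lemma disjointly_supported_subset:
  "disjointly_supported W T u \<Longrightarrow> W' \<subseteq> W \<Longrightarrow> disjointly_supported W' T u"
  unfolding disjointly_supported_def by (blast intro: disjoint_family_on_mono)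

locale finite_hereditary_family =
  fixes \<A> :: "'a set set"
  assumes empty_mem: "{} \<in> \<A>"
    and finite_mem: "A \<in> \<A> \<Longrightarrow> finite A"
    and subset_mem: "A \<in> \<A> \<Longrightarrow> B \<subseteq> A \<Longrightarrow> B \<in> \<A>"
begin

lemma nonempty: "\<A> \<noteq> {}"
  using empty_mem by blast

lemma L2_set_le_L2_set_support:
  assumes "A \<in> \<A>" "finite s" "\<And>i. i \<notin> s \<Longrightarrow> w i = 0"
  shows "L2_set w A \<le> L2_set w s"
proof -
  have "L2_set w A = L2_set w (A \<inter> s)"
    using assms finite_mem L2_set_Int_support by blast
  also have "\<dots> \<le> L2_set w s"
    unfolding L2_set_def using assms(2) by (intro real_sqrt_le_mono sum_mono2) auto
  finally show ?thesis .
qed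

lemma normA_finite_finite_support:
  "finite s \<Longrightarrow> (\<And>i. i \<notin> s \<Longrightarrow> w i = 0) \<Longrightarrow> normA_finite \<A> w"
  by (rule normA_finiteI) (rule L2_set_le_L2_set_support)

lemma normA_le_sum_abs_support:
  assumes "finite s" "\<And>i. i \<notin> s \<Longrightarrow> w i = 0"
  shows "normA \<A> w \<le> (\<Sum>i\<in>s. \<bar>w i\<bar>)"
proof (rule normA_le[OF nonempty])
  fix A assume "A \<in> \<A>"
  then have "L2_set w A \<le> L2_set w s" using assms by (rule L2_set_le_L2_set_support)
  also have "\<dots> \<le> (\<Sum>i\<in>s. \<bar>w i\<bar>)" by (rule L2_set_le_sum_abs)
  finally show "L2_set w A \<le> (\<Sum>i\<in>s. \<bar>w i\<bar>)" .
qed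

lemma normA_restrict_le:
  assumes "normA_finite \<A> z"
  shows "normA \<A> (\<lambda>i. if i \<in> T then z i else 0) \<le> normA \<A> z"
proof (rule normA_le[OF nonempty])
  fix A assume A: "A \<in> \<A>"
  have "L2_set (\<lambda>i. if i \<in> T then z i else 0) A = L2_set (\<lambda>i. if i \<in> T then z i else 0) (A \<inter> T)"
    using finite_mem[OF A] by (rule L2_set_Int_support) simp
  also have "\<dots> = L2_set z (A \<inter> T)"
    by (rule L2_set_cong) auto
  also have "\<dots> \<le> normA \<A> z"
    using A assms L2_set_le_normA subset_mem by blast
  finally show "L2_set (\<lambda>i. if i \<in> T then z i else 0) A \<le> normA \<A> z" .
qed

lemma normA_restrict_approx:
  assumes "normA_finite \<A> y" "normA_finite \<A> (y - z)"
  shows "normA \<A> (\<lambda>i. if i \<in> T then z i else 0) \<le> normA \<A> y + normA \<A> (y - z)"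
proof -
  have fin: "normA_finite \<A> (z - y)" using assms(2) normA_minus_commute(2) by blast
  have "normA_finite \<A> z" using normA_finite_add[OF assms(1) fin] by simp
  then have "normA \<A> (\<lambda>i. if i \<in> T then z i else 0) \<le> normA \<A> z"
    by (rule normA_restrict_le)
  also have "\<dots> \<le> normA \<A> y + normA \<A> (z - y)"
    using normA_triangle[OF nonempty assms(1) fin] by simp
  finally show ?thesis using normA_minus_commute(1)[of \<A> y z] by simp
qed

lemma normA_attained:
  assumes "finite T" "\<And>i. i \<notin> T \<Longrightarrow> u i = 0"
  obtains A where "A \<in> \<A>" "A \<subseteq> T" "normA \<A> u = L2_set u A"
proof -
  let ?\<A>\<^sub>T = "\<A> \<inter> Pow T"
  have image_eq: "L2_set u ` \<A> = L2_set u ` ?\<A>\<^sub>T"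
  proof (intro equalityI subsetI)
    fix v assume "v \<in> L2_set u ` \<A>"
    then obtain A where "A \<in> \<A>" "v = L2_set u A" by blast
    moreover have "L2_set u A = L2_set u (A \<inter> T)"
      using \<open>A \<in> \<A>\<close> assms(2) finite_mem L2_set_Int_support by blast
    ultimately show "v \<in> L2_set u ` ?\<A>\<^sub>T" using subset_mem by blast
  qed blast
  have fin: "finite (L2_set u ` ?\<A>\<^sub>T)" and ne: "L2_set u ` ?\<A>\<^sub>T \<noteq> {}"
    using assms(1) empty_mem by auto
  have "normA \<A> u \<in> L2_set u ` ?\<A>\<^sub>T"
    unfolding normA_eq_SUP_L2_set image_eq cSup_eq_Max[OF fin ne] using Max_in[OF fin ne] .
  then show ?thesis using that by blast
qed

lemma normA_diff_cut_root:
  fixes r :: "'a set" and z z' :: "'a \<Rightarrow> real"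
  defines "drop_root \<equiv> \<lambda>z i. if i \<notin> r then z i else 0"
  assumes r: "finite r" and supp: "finite {\<alpha>. z \<alpha> \<noteq> 0}" "finite {\<alpha>. z' \<alpha> \<noteq> 0}"
    and fin: "normA_finite \<A> y" "normA_finite \<A> y'" "normA_finite \<A> (y - z)" "normA_finite \<A> (y' - z')"
  shows "\<bar>normA \<A> (y - y') - normA \<A> (drop_root z - drop_root z')\<bar>
    \<le> normA \<A> (y - z) + normA \<A> (y' - z') + (\<Sum>\<alpha>\<in>r. \<bar>z \<alpha> - z' \<alpha>\<bar>)"
proof -
  let ?v = "(z - z') - (drop_root z - drop_root z')"
  have v_support: "?v i = 0" if "i \<notin> r" for i
    using that unfolding drop_root_def by simp
  have "normA \<A> ?v \<le> (\<Sum>\<alpha>\<in>r. \<bar>?v \<alpha>\<bar>)"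
    using r v_support by (rule normA_le_sum_abs_support)
  also have "\<dots> = (\<Sum>\<alpha>\<in>r. \<bar>z \<alpha> - z' \<alpha>\<bar>)"
    by (rule sum.cong) (simp_all add: drop_root_def)
  finally have "normA \<A> ?v \<le> (\<Sum>\<alpha>\<in>r. \<bar>z \<alpha> - z' \<alpha>\<bar>)" .
  moreover have "normA_finite \<A> (drop_root z)"
    using supp(1) by (rule normA_finite_finite_support) (simp add: drop_root_def)
  moreover have "normA_finite \<A> (drop_root z')"
    using supp(2) by (rule normA_finite_finite_support) (simp add: drop_root_def)
  moreover have "normA_finite \<A> ?v"
    using r v_support by (rule normA_finite_finite_support)
  ultimately show ?thesis
    using normA_diff_perturb[OF nonempty fin(3,4), of "drop_root z" "drop_root z'"] fin(1,2)
    by (simp add: normA_finite_diff)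
qed

lemma uncountable_Delta_approx:
  assumes Y: "Y \<subseteq> XA \<A>" "uncountable Y" and e: "0 < e"
  obtains W T u where "W \<subseteq> Y" "uncountable W" "\<And>y. y \<in> W \<Longrightarrow> finite (T y)" "disjoint_family_on T W"
    "\<And>y i. i \<notin> T y \<Longrightarrow> u y i = 0"
    "\<And>y. y \<in> W \<Longrightarrow> normA \<A> (u y) \<le> normA \<A> y + e"
    "\<And>y y'. y \<in> W \<Longrightarrow> y' \<in> W \<Longrightarrow> \<bar>normA \<A> (y - y') - normA \<A> (u y - u y')\<bar> < 3 * e"
proof -
  obtain z where z: "\<And>y. y \<in> Y \<Longrightarrow> z y \<in> c00" "\<And>y. y \<in> Y \<Longrightarrow> normA_finite \<A> (y - z y)"
    "\<And>y. y \<in> Y \<Longrightarrow> normA \<A> (y - z y) < e"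
    by (rule XA_approx_c00[OF Y(1) e]) blast
  then have supp: "finite {\<alpha>. z y \<alpha> \<noteq> 0}" if "y \<in> Y" for y
    using that unfolding c00_def by blast
  then obtain r W where r: "finite r" "W \<subseteq> Y" "uncountable W"
    "\<And>y y'. y \<in> W \<Longrightarrow> y' \<in> W \<Longrightarrow> y \<noteq> y' \<Longrightarrow> {\<alpha>. z y \<alpha> \<noteq> 0} \<inter> {\<alpha>. z y' \<alpha> \<noteq> 0} \<subseteq> r"
    "\<And>y y'. y \<in> W \<Longrightarrow> y' \<in> W \<Longrightarrow> (\<Sum>\<alpha>\<in>r. \<bar>z y \<alpha> - z y' \<alpha>\<bar>) \<le> e"
    using uncountable_Delta_system_close_on_root[of Y z e] Y(2) e by blast
  have Y': "y \<in> Y" "normA_finite \<A> y" if "y \<in> W" for y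
    using that r(2) Y(1) XA_normA_finite by blast+
  show ?thesis
  proof (rule that[of W "\<lambda>y. {\<alpha>. z y \<alpha> \<noteq> 0} - r" "\<lambda>y i. if i \<notin> r then z y i else 0"])
    show "W \<subseteq> Y" "uncountable W" by (fact r(2), fact r(3))
    show "finite ({\<alpha>. z y \<alpha> \<noteq> 0} - r)" if "y \<in> W" for y using supp Y'(1)[OF that] by blast
    show "disjoint_family_on (\<lambda>y. {\<alpha>. z y \<alpha> \<noteq> 0} - r) W"
      unfolding disjoint_family_on_def using r(4) by blast
  next
    fix y assume "y \<in> W"
    show "normA \<A> (\<lambda>i. if i \<notin> r then z y i else 0) \<le> normA \<A> y + e"
      using normA_restrict_approx[OF Y'(2) z(2), of y "- r"] z(3)[of y] Y'(1)[OF \<open>y \<in> W\<close>]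
        \<open>y \<in> W\<close> by simp
  next
    fix y y' assume "y \<in> W" "y' \<in> W"
    then have "y \<in> Y" "y' \<in> Y" using Y'(1) by blast+
    have "\<bar>normA \<A> (y - y') - normA \<A> ((\<lambda>i. if i \<notin> r then z y i else 0) - (\<lambda>i. if i \<notin> r then z y' i else 0))\<bar>
      \<le> normA \<A> (y - z y) + normA \<A> (y' - z y') + (\<Sum>\<alpha>\<in>r. \<bar>z y \<alpha> - z y' \<alpha>\<bar>)"
      by (rule normA_diff_cut_root[OF r(1) supp[OF \<open>y \<in> Y\<close>] supp[OF \<open>y' \<in> Y\<close>]
            Y'(2)[OF \<open>y \<in> W\<close>] Y'(2)[OF \<open>y' \<in> W\<close>] z(2)[OF \<open>y \<in> Y\<close>] z(2)[OF \<open>y' \<in> Y\<close>]])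
    then show "\<bar>normA \<A> (y - y') - normA \<A> ((\<lambda>i. if i \<notin> r then z y i else 0) - (\<lambda>i. if i \<notin> r then z y' i else 0))\<bar> < 3 * e"
      using z(3)[OF \<open>y \<in> Y\<close>] z(3)[OF \<open>y' \<in> Y\<close>] r(5)[OF \<open>y \<in> W\<close> \<open>y' \<in> W\<close>] by linarith
  qed auto
qed

lemma disjointly_supported_normA_finite:
  assumes "disjointly_supported W T u" "w \<in> W"
  shows "normA_finite \<A> (u w)"
  using assms unfolding disjointly_supported_def by (intro normA_finite_finite_support[of "T w"]) auto

lemma uncountable_separated_approx:
  assumes "Y \<subseteq> XA \<A>" "uncountable Y" "0 < e" "separated \<A> (3 * e) Y"
  obtains W T u where "W \<subseteq> Y" "uncountable W" "disjointly_supported W T u"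
    "\<And>y. y \<in> W \<Longrightarrow> normA \<A> (u y) \<le> normA \<A> y + e"
    "\<And>y y'. y \<in> W \<Longrightarrow> y' \<in> W \<Longrightarrow> \<bar>normA \<A> (y - y') - normA \<A> (u y - u y')\<bar> < 3 * e"
proof -
  obtain W T u where W: "W \<subseteq> Y" "uncountable W" "\<And>y. y \<in> W \<Longrightarrow> finite (T y)" "disjoint_family_on T W"
    "\<And>y i. i \<notin> T y \<Longrightarrow> u y i = 0"
    "\<And>y. y \<in> W \<Longrightarrow> normA \<A> (u y) \<le> normA \<A> y + e"
    "\<And>y y'. y \<in> W \<Longrightarrow> y' \<in> W \<Longrightarrow> \<bar>normA \<A> (y - y') - normA \<A> (u y - u y')\<bar> < 3 * e"
    by (rule uncountable_Delta_approx[OF assms(1-3)]) (rule that)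
  have empty_tail_unique: "x = y" if "x \<in> W" "y \<in> W" "T x = {}" "T y = {}" for x y
  proof (rule ccontr)
    assume "x \<noteq> y"
    have "u x - u y = 0" using that(3,4) W(5) by (auto simp: fun_eq_iff)
    then have "normA \<A> (x - y) < 3 * e" using W(7)[OF that(1,2)] normA_zero[OF nonempty] by simp
    moreover have "3 * e \<le> normA \<A> (x - y)"
      using assms(4) that(1,2) W(1) \<open>x \<noteq> y\<close> unfolding separated_def by blast
    ultimately show False by simp
  qed
  have "uncountable {y\<in>W. T y \<noteq> {}}"
    by (rule uncountable_Collect_at_most_one_exception[OF W(2)]) (use empty_tail_unique in blast)
  then show ?thesis
  proof (rule that[of _ T u, rotated])
    show "{y\<in>W. T y \<noteq> {}} \<subseteq> Y" using W(1) by blast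
    show "disjointly_supported {y\<in>W. T y \<noteq> {}} T u"
      unfolding disjointly_supported_def
      using W(3,5) disjoint_family_on_mono[OF _ W(4), of "{y\<in>W. T y \<noteq> {}}"] by auto
  qed (use W(6,7) in auto)
qed

end

section \<open>T0-families\<close>

lemma T0_family_member_pair:
  assumes "A \<in> T0_family c" "x \<in> A" "y \<in> A" "x \<noteq> y"
  shows "fst (c {x, y}) = 0"
proof -
  have "{x, y} \<in> pairs A" unfolding pairs_def using assms(2-4) by simp
  then show ?thesis using assms(1) unfolding T0_family_def by (auto simp: image_subset_iff)
qed

interpretation T0_family: finite_hereditary_family "T0_family c" for c
proof
  show "{} \<in> T0_family c"
    unfolding T0_family_def pairs_def by auto
  show "A \<in> T0_family c \<Longrightarrow> finite A" for A
    unfolding T0_family_def by blast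
  show "B \<in> T0_family c" if "A \<in> T0_family c" "B \<subseteq> A" for A B
  proof -
    have "pairs B \<subseteq> pairs A" unfolding pairs_def using that(2) by blast
    then show ?thesis using that unfolding T0_family_def by (auto intro: finite_subset)
  qed
qed

lemma pairs_Un_subset: "pairs (A \<union> B) \<subseteq> pairs A \<union> pairs B \<union> otimes A B"
proof
  fix p assume "p \<in> pairs (A \<union> B)"
  then obtain x y where p: "p = {x, y}" "x \<noteq> y" "x \<in> A \<union> B" "y \<in> A \<union> B"
    unfolding pairs_def card_2_iff by blast
  then show "p \<in> pairs A \<union> pairs B \<union> otimes A B"
    unfolding pairs_def otimes_def by (cases "x \<in> A"; cases "y \<in> A") (auto simp: insert_commute)
qed

lemma otimes_mono: "A \<subseteq> T \<Longrightarrow> A' \<subseteq> T' \<Longrightarrow> otimes A A' \<subseteq> otimes T T'"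
  unfolding otimes_def by blast

lemma T0_family_Un:
  assumes "A \<in> T0_family c" "B \<in> T0_family c" "(fst \<circ> c) ` otimes A B \<subseteq> {0}"
  shows "A \<union> B \<in> T0_family c"
proof -
  have "(fst \<circ> c) ` pairs (A \<union> B) \<subseteq> (fst \<circ> c) ` (pairs A \<union> pairs B \<union> otimes A B)"
    using pairs_Un_subset by (rule image_mono)
  also have "\<dots> \<subseteq> {0}"
    using assms unfolding T0_family_def image_Un by blast
  finally show ?thesis using assms unfolding T0_family_def by blast
qed

lemma T0_family_disjoint_from_one_side:
  fixes c :: "'a set \<Rightarrow> 'i::zero_neq_one \<times> 'j"
  assumes "A \<in> T0_family c" "T \<inter> T' = {}" "(fst \<circ> c) ` otimes T T' \<subseteq> {1}"
  shows "A \<inter> T = {} \<or> A \<inter> T' = {}"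
proof (rule ccontr)
  assume "\<not> ?thesis"
  then obtain x y where xy: "x \<in> A" "x \<in> T" "y \<in> A" "y \<in> T'" by blast
  then have "x \<noteq> y" using assms(2) by blast
  then have "fst (c {x, y}) = 0" using T0_family_member_pair[OF assms(1)] xy by blast
  moreover have "{x, y} \<in> otimes T T'" unfolding otimes_def using xy by blast
  then have "fst (c {x, y}) = 1" using assms(3) by auto
  ultimately show False by simp
qed

lemma T0_normA_diff_le_max:
  fixes c :: "'a set \<Rightarrow> 'i::zero_neq_one \<times> 'j"
  assumes "finite T" "finite T'" "T \<inter> T' = {}"
    and "\<And>i. i \<notin> T \<Longrightarrow> u i = 0" "\<And>i. i \<notin> T' \<Longrightarrow> u' i = 0"
    and "(fst \<circ> c) ` otimes T T' \<subseteq> {1}"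
  shows "normA (T0_family c) (u - u') \<le> max (normA (T0_family c) u) (normA (T0_family c) u')"
proof (rule normA_le[OF T0_family.nonempty])
  fix A assume A: "A \<in> T0_family c"
  have fin: "normA_finite (T0_family c) u" "normA_finite (T0_family c) (- u')"
    using T0_family.normA_finite_finite_support[where s = T and w = u, OF assms(1,4)]
      T0_family.normA_finite_finite_support[where s = T' and w = u', OF assms(2,5)] by simp_all
  consider "A \<inter> T' = {}" | "A \<inter> T = {}"
    using T0_family_disjoint_from_one_side[OF A assms(3,6)] by blast
  then show "L2_set (u - u') A \<le> max (normA (T0_family c) u) (normA (T0_family c) u')"
  proof cases
    case 1
    then have "L2_set (u - u') A = L2_set u A" using assms(5) by (intro L2_set_cong) auto
    then show ?thesis using L2_set_le_normA[OF fin(1) A] by simp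
  next
    case 2
    then have "L2_set (u - u') A = L2_set (- u') A" using assms(4) by (intro L2_set_cong) auto
    then show ?thesis using L2_set_le_normA[OF fin(2) A] by simp
  qed
qed

lemma T0_normA_sq_add_le:
  fixes c :: "'a set \<Rightarrow> 'i::zero_neq_one \<times> 'j"
  assumes "finite T" "finite T'" "T \<inter> T' = {}"
    and "\<And>i. i \<notin> T \<Longrightarrow> u i = 0" "\<And>i. i \<notin> T' \<Longrightarrow> u' i = 0"
    and "(fst \<circ> c) ` otimes T T' \<subseteq> {0}"
  shows "(normA (T0_family c) u)\<^sup>2 + (normA (T0_family c) u')\<^sup>2 \<le> (normA (T0_family c) (u - u'))\<^sup>2"
proof -
  obtain A where A: "A \<in> T0_family c" "A \<subseteq> T" "normA (T0_family c) u = L2_set u A"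
    using T0_family.normA_attained[where u = u, OF assms(1,4)] by blast
  obtain A' where A': "A' \<in> T0_family c" "A' \<subseteq> T'" "normA (T0_family c) u' = L2_set u' A'"
    using T0_family.normA_attained[where u = u', OF assms(2,5)] by blast
  have "A \<union> A' \<in> T0_family c"
    using T0_family_Un[OF A(1) A'(1)] otimes_mono[OF A(2) A'(2)] assms(6) by blast
  moreover have "normA_finite (T0_family c) (u - u')"
    by (rule T0_family.normA_finite_finite_support[of "T \<union> T'"]) (use assms(1,2,4,5) in auto)
  ultimately have "L2_set (u - u') (A \<union> A') \<le> normA (T0_family c) (u - u')"
    by (rule L2_set_le_normA[rotated])
  then have "(L2_set (u - u') (A \<union> A'))\<^sup>2 \<le> (normA (T0_family c) (u - u'))\<^sup>2"
    by (rule power_mono[OF _ L2_set_nonneg])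
  moreover have "finite A" "finite A'" "A \<inter> A' = {}"
    using A(2) A'(2) assms(1-3) finite_subset by blast+
  then have "(L2_set (u - u') (A \<union> A'))\<^sup>2 = (L2_set u A)\<^sup>2 + (L2_set u' A')\<^sup>2"
    by (rule L2_set_diff_Un_power2) (use A(2) A'(2) assms(3-5) in blast)+
  ultimately show ?thesis using A(3) A'(3) by simp
qed

lemma T0_exists_pair_normA_diff_le_max:
  fixes c :: "'a::wellorder set \<Rightarrow> 'i::zero_neq_one \<times> 'j" and T :: "'b \<Rightarrow> 'a set"
  assumes "omega1_type TYPE('a)" "strong_T_coloring I J c" "uncountable W" "disjointly_supported W T u"
  obtains a b where "a \<in> W" "b \<in> W" "a \<noteq> b"
    "normA (T0_family c) (u a - u b) \<le> max (normA (T0_family c) (u a)) (normA (T0_family c) (u b))"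
proof -
  have T: "\<And>w. w \<in> W \<Longrightarrow> finite (T w)" "\<And>w. w \<in> W \<Longrightarrow> T w \<noteq> {}" "disjoint_family_on T W"
    and u: "\<And>w i. i \<notin> T w \<Longrightarrow> u w i = 0"
    using assms(4) unfolding disjointly_supported_def by blast+
  obtain a b where ab: "a \<in> W" "b \<in> W" "a \<noteq> b" "(fst \<circ> c) ` otimes (T a) (T b) = {1}"
    using strong_T_coloring_homogeneous_pair[OF assms(1-3) T, of 1] by blast
  have "normA (T0_family c) (u a - u b) \<le> max (normA (T0_family c) (u a)) (normA (T0_family c) (u b))"
    by (rule T0_normA_diff_le_max[OF T(1)[OF ab(1)] T(1)[OF ab(2)]
          disjoint_family_onD[OF T(3) ab(1-3)] u u equalityD1[OF ab(4)]])
  then show ?thesis by (rule that[OF ab(1-3)])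
qed

lemma T0_exists_pair_normA_sq_add_le:
  fixes c :: "'a::wellorder set \<Rightarrow> 'i::zero_neq_one \<times> 'j" and T :: "'b \<Rightarrow> 'a set"
  assumes "omega1_type TYPE('a)" "strong_T_coloring I J c" "uncountable W" "disjointly_supported W T u"
  obtains p q where "p \<in> W" "q \<in> W" "p \<noteq> q"
    "(normA (T0_family c) (u p))\<^sup>2 + (normA (T0_family c) (u q))\<^sup>2 \<le> (normA (T0_family c) (u p - u q))\<^sup>2"
proof -
  have T: "\<And>w. w \<in> W \<Longrightarrow> finite (T w)" "\<And>w. w \<in> W \<Longrightarrow> T w \<noteq> {}" "disjoint_family_on T W"
    and u: "\<And>w i. i \<notin> T w \<Longrightarrow> u w i = 0"
    using assms(4) unfolding disjointly_supported_def by blast+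
  obtain p q where pq: "p \<in> W" "q \<in> W" "p \<noteq> q" "(fst \<circ> c) ` otimes (T p) (T q) = {0}"
    using strong_T_coloring_homogeneous_pair[OF assms(1-3) T, of 0] by blast
  have "(normA (T0_family c) (u p))\<^sup>2 + (normA (T0_family c) (u q))\<^sup>2 \<le> (normA (T0_family c) (u p - u q))\<^sup>2"
    by (rule T0_normA_sq_add_le[OF T(1)[OF pq(1)] T(1)[OF pq(2)]
          disjoint_family_onD[OF T(3) pq(1-3)] u u equalityD1[OF pq(4)]])
  then show ?thesis by (rule that[OF pq(1-3)])
qed

lemma T0_no_uncountable_equilateral:
  fixes c :: "'a::wellorder set \<Rightarrow> 'i::zero_neq_one \<times> 'j"
  assumes "omega1_type TYPE('a)" "strong_T_coloring I J c" "Y \<subseteq> XA (T0_family c)" "uncountable Y"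
  shows "\<not> equilateral (T0_family c) Y"
proof
  let ?N = "normA (T0_family c)"
  assume "equilateral (T0_family c) Y"
  then obtain \<delta> where "\<delta> > 0" and dist: "\<And>y y'. y \<in> Y \<Longrightarrow> y' \<in> Y \<Longrightarrow> y \<noteq> y' \<Longrightarrow> ?N (y - y') = \<delta>"
    unfolding equilateral_def by blast
  \<comment> \<open>Any e > 0 with (\<delta> + 3 e)^2 < 2 (\<delta> - 4 e)^2 would do.\<close>
  define e where "e = \<delta> / 100"
  have "0 < e" using \<open>\<delta> > 0\<close> unfolding e_def by simp
  have sep: "separated (T0_family c) (3 * e) Y"
    unfolding separated_def using dist \<open>\<delta> > 0\<close> by (simp add: e_def)
  obtain W T u where W: "W \<subseteq> Y" "uncountable W" "disjointly_supported W T u"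
    "\<And>y y'. y \<in> W \<Longrightarrow> y' \<in> W \<Longrightarrow> \<bar>?N (y - y') - ?N (u y - u y')\<bar> < 3 * e"
    by (rule T0_family.uncountable_separated_approx[OF assms(3,4) \<open>0 < e\<close> sep]) (rule that)
  obtain W' where W': "W' \<subseteq> W" "uncountable W'"
    "\<And>y y'. y \<in> W' \<Longrightarrow> y' \<in> W' \<Longrightarrow> \<bar>?N (u y) - ?N (u y')\<bar> < e"
    using uncountable_subset_close[OF W(2) \<open>0 < e\<close>, of "\<lambda>y. ?N (u y)"] by blast
  have W'_supp: "disjointly_supported W' T u"
    using W(3) W'(1) by (rule disjointly_supported_subset)
  obtain a b where ab: "a \<in> W'" "b \<in> W'" "a \<noteq> b" "?N (u a - u b) \<le> max (?N (u a)) (?N (u b))"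
    by (rule T0_exists_pair_normA_diff_le_max[OF assms(1,2) W'(2) W'_supp])
  obtain p q where pq: "p \<in> W'" "q \<in> W'" "p \<noteq> q" "(?N (u p))\<^sup>2 + (?N (u q))\<^sup>2 \<le> (?N (u p - u q))\<^sup>2"
    by (rule T0_exists_pair_normA_sq_add_le[OF assms(1,2) W'(2) W'_supp])
  have "a \<in> W" "b \<in> W" "p \<in> W" "q \<in> W" using ab pq W'(1) by auto
  then have "?N (a - b) = \<delta>" "?N (p - q) = \<delta>" using dist ab(3) pq(3) W(1) by auto
  then have "\<delta> - 3 * e < ?N (u a - u b)" "?N (u p - u q) < \<delta> + 3 * e"
    using W(4)[OF \<open>a \<in> W\<close> \<open>b \<in> W\<close>] W(4)[OF \<open>p \<in> W\<close> \<open>q \<in> W\<close>] by auto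
  moreover have "?N (u a) - e < ?N (u r)" "?N (u b) - e < ?N (u r)" if "r \<in> W'" for r
    using W'(3)[OF ab(1) that] W'(3)[OF ab(2) that] by auto
  ultimately have "\<delta> - 4 * e < ?N (u p)" "\<delta> - 4 * e < ?N (u q)" "?N (u p - u q) < \<delta> + 3 * e"
    using ab(4) pq(1,2) by (smt (verit))+
  moreover have "0 \<le> ?N (u p - u q)"
    by (rule normA_nonneg[OF T0_family.nonempty normA_finite_diff[OF
          T0_family.disjointly_supported_normA_finite[OF W'_supp pq(1)]
          T0_family.disjointly_supported_normA_finite[OF W'_supp pq(2)]]])
  ultimately have "(\<delta> - 4 * e)\<^sup>2 < (?N (u p))\<^sup>2" "(\<delta> - 4 * e)\<^sup>2 < (?N (u q))\<^sup>2" "(?N (u p - u q))\<^sup>2 < (\<delta> + 3 * e)\<^sup>2"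
    using \<open>\<delta> > 0\<close> \<open>0 \<le> ?N (u p - u q)\<close> unfolding e_def
    by (auto intro!: power_strict_mono)
  then have "2 * (\<delta> - 4 * e)\<^sup>2 < (\<delta> + 3 * e)\<^sup>2"
    using pq(4) by linarith
  then show False using \<open>\<delta> > 0\<close> unfolding e_def by (simp add: power2_eq_square algebra_simps)
qed

lemma T0_no_uncountable_separated_sphere:
  fixes c :: "'a::wellorder set \<Rightarrow> 'i::zero_neq_one \<times> 'j"
  assumes "omega1_type TYPE('a)" "strong_T_coloring I J c" "0 < \<epsilon>"
    and "Y \<subseteq> unit_sphereA (T0_family c)" "uncountable Y"
  shows "\<not> separated (T0_family c) (1 + \<epsilon>) Y"
proof
  let ?N = "normA (T0_family c)"
  assume sep: "separated (T0_family c) (1 + \<epsilon>) Y"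
  define e where "e = \<epsilon> / 5"
  have "0 < e" using assms(3) unfolding e_def by simp
  have Y: "Y \<subseteq> XA (T0_family c)" "\<And>y. y \<in> Y \<Longrightarrow> ?N y = 1"
    using assms(4) unfolding unit_sphereA_def by auto
  have "separated (T0_family c) (3 * e) Y"
    using sep by (rule separated_mono) (simp add: e_def assms(3) less_imp_le)
  then obtain W T u where W: "W \<subseteq> Y" "uncountable W" "disjointly_supported W T u"
    "\<And>y. y \<in> W \<Longrightarrow> ?N (u y) \<le> ?N y + e"
    "\<And>y y'. y \<in> W \<Longrightarrow> y' \<in> W \<Longrightarrow> \<bar>?N (y - y') - ?N (u y - u y')\<bar> < 3 * e"
    by (rule T0_family.uncountable_separated_approx[OF Y(1) assms(5) \<open>0 < e\<close>]) (rule that)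
  obtain a b where ab: "a \<in> W" "b \<in> W" "a \<noteq> b" "?N (u a - u b) \<le> max (?N (u a)) (?N (u b))"
    by (rule T0_exists_pair_normA_diff_le_max[OF assms(1,2) W(2,3)])
  have "1 + \<epsilon> \<le> ?N (a - b)"
    using sep ab(1-3) W(1) unfolding separated_def by blast
  also have "\<dots> < ?N (u a - u b) + 3 * e"
    using W(5)[OF ab(1,2)] by simp
  also have "\<dots> \<le> 1 + 4 * e"
  proof -
    have "?N (u a) \<le> 1 + e" "?N (u b) \<le> 1 + e"
      using W(4)[OF ab(1)] W(4)[OF ab(2)] Y(2) ab(1,2) W(1) by auto
    then show ?thesis using ab(4) by simp
  qed
  finally show False unfolding e_def using assms(3) by simp
qed

theorem proposition4p3:
  fixes I :: "'i::zero_neq_one set" and J :: "'j set"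
    and c :: "'a::wellorder set \<Rightarrow> 'i \<times> 'j" and \<epsilon> :: real
  assumes "omega1_type TYPE('a)"
    and "strong_T_coloring I J c"
    and "\<epsilon> > 0"
  shows "\<not> (\<exists>Y \<subseteq> XA (T0_family c). uncountable Y \<and> equilateral (T0_family c) Y)
       \<and> \<not> (\<exists>Y \<subseteq> unit_sphereA (T0_family c). uncountable Y \<and> separated (T0_family c) (1 + \<epsilon>) Y)"
  using T0_no_uncountable_equilateral[OF assms(1,2)] T0_no_uncountable_separated_sphere[OF assms]
  by blast

end
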